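(* Let $\lambda$ be a straight or skew shape with $n$ boxes and let $m\in\mathbb N=\{1,2,\dots\}$. Then $\#T[\lambda,m]=2^nf^\lambda$, where $f^\lambda$ is the number of standard Young tableaux of shape $\lambda$.
   Context: For a box in row $i$, column $j$ (rows numbered downward) its (semi-integer) content is $j-i+\frac12$. A B-Young tableau is a filling of a skew diagram by the $2n$ numbers $\pm1,\dots,\pm n$, one per box, such that $c_{-k}=-c_k$ for $1\le k\le n$, where $c_k$ is the content of the box containing $k$; it is standard if entries increase along rows and down columns. Since no content is $0$, a B-Young tableau is regarded as determined by its part of positive content (entries and contents), the negative part being forced. For $m\in\mathbb N$, $T[\lambda,m]$ is the set of standard B-Young tableaux whose positive-content boxes form the shape $\lambda$ and whose smallest positive content is $m+\frac12$. *)

theory Defs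
  imports Main
begin

text \<open>A partition is a weakly decreasing list of naturals. Cells are (row, column),
rows numbered downward.\<close>

definition is_partition :: "nat list \<Rightarrow> bool" where
  "is_partition p \<longleftrightarrow> sorted_wrt (\<ge>) p"

definition young_diagram :: "nat list \<Rightarrow> (nat \<times> nat) set" where
  "young_diagram p = {(i, j). i < length p \<and> j < p ! i}"

definition skew_diagram :: "nat list \<Rightarrow> nat list \<Rightarrow> (nat \<times> nat) set" where
  "skew_diagram mu nu = young_diagram mu - young_diagram nu"

text \<open>Standard Young tableaux of a shape D with n = card D boxes: bijective fillings
by 1..n increasing along rows and down columns (for skew shapes rows/columns are
contiguous, so adjacent boxes suffice).\<close>
definition SYT :: "(nat \<times> nat) set \<Rightarrow> ((nat \<times> nat) \<Rightarrow> nat) set" where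
  "SYT D = {F. bij_betw F D {1..card D} \<and> (\<forall>c. c \<notin> D \<longrightarrow> F c = 0) \<and>
     (\<forall>i j. (i, j) \<in> D \<and> (i, Suc j) \<in> D \<longrightarrow> F (i, j) < F (i, Suc j)) \<and>
     (\<forall>i j. (i, j) \<in> D \<and> (Suc i, j) \<in> D \<longrightarrow> F (i, j) < F (Suc i, j))}"

definition num_SYT :: "(nat \<times> nat) set \<Rightarrow> nat" where
  "num_SYT D = card (SYT D)"

text \<open>The (semi-integer) content of box (i,j) is j - i + 1/2;
we store the integer part  j - i  (so content c+1/2 is represented by c).
Negation of contents  c+1/2 \<mapsto> -(c+1/2) = (-c-1)+1/2  is  c \<mapsto> -c-1.\<close>

definition icontent :: "int \<times> int \<Rightarrow> int" where
  "icontent c = snd c - fst c"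

definition B_young :: "nat \<Rightarrow> (int \<times> int) set \<Rightarrow> (int \<times> int \<Rightarrow> int) \<Rightarrow> bool" where
  "B_young n D F \<longleftrightarrow> finite D \<and>
     bij_betw F D ({- int n..-1} \<union> {1..int n}) \<and>
     (\<forall>c\<in>D. \<forall>c'\<in>D. F c' = - F c \<longrightarrow> icontent c' = - icontent c - 1)"

definition B_standard :: "(int \<times> int) set \<Rightarrow> (int \<times> int \<Rightarrow> int) \<Rightarrow> bool" where
  "B_standard D F \<longleftrightarrow>
     (\<forall>i j. (i, j) \<in> D \<and> (i, j + 1) \<in> D \<longrightarrow> F (i, j) < F (i, j + 1)) \<and>
     (\<forall>i j. (i, j) \<in> D \<and> (i + 1, j) \<in> D \<longrightarrow> F (i, j) < F (i + 1, j))"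

text \<open>Placement of the shape lambda as the positive-content part, shifted horizontally
so that its smallest content is m + 1/2 (the placement is canonical up to diagonal
translation, which does not change contents).\<close>
definition place :: "(nat \<times> nat) set \<Rightarrow> nat \<Rightarrow> (int \<times> int) set" where
  "place L m = (let s = int m - Min {int j - int i | i j. (i, j) \<in> L}
                in (\<lambda>(i, j). (int i, int j + s)) ` L)"

text \<open>Rotation by 180 degrees mapping a box of content c+1/2 to a box of content
-(c+1/2); used to place the (forced) negative-content part.\<close>
definition rot :: "int \<times> int \<Rightarrow> int \<times> int" where
  "rot c = (- fst c - 1, - snd c - 2)"

text \<open>T[lambda, m]: standard B-Young tableaux whose positive-content part is lambda with
smallest positive content m+1/2, each identified with its positive-content part
(restriction of the filling to the positive boxes).\<close>
definition T_B :: "(nat \<times> nat) set \<Rightarrow> nat \<Rightarrow> (int \<times> int \<Rightarrow> int) set" where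
  "T_B L m = (let P = place L m; D = P \<union> rot ` P
              in (\<lambda>F c. if c \<in> P then F c else 0) `
                 {F. B_young (card L) D F \<and> B_standard D F})"

end

theory Submission
  imports Defs
begin

(* Let P be the positive-content part of a tableau in T[lambda, m] and n = |lambda|. Since
   m >= 1, every box of P has content at least 3/2 and every box of its mirror image rot P
   has content at most -3/2, so no box of P is adjacent to a box of rot P. Hence the
   restriction of a standard B-Young tableau to P is a standard filling of P by a set S
   that contains exactly one of k, -k for each k <= n, and conversely every such filling
   extends antisymmetrically (F (rot c) = - F c) to a standard B-Young tableau. There are
   2^n such sets S, and for each of them the order isomorphism {1..n} -> S identifies the
   standard fillings of P by S with the standard Young tableaux of shape lambda. *)

section \<open>Fillings increasing along a relation\<close>

definition increasing_fillings ::
    "'a set \<Rightarrow> 'b::{zero,ord} set \<Rightarrow> ('a \<times> 'a) set \<Rightarrow> ('a \<Rightarrow> 'b) set" where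
  "increasing_fillings D V R =
     {G. bij_betw G D V \<and> (\<forall>c. c \<notin> D \<longrightarrow> G c = 0) \<and> (\<forall>(a, b)\<in>R. G a < G b)}"

lemma finite_increasing_fillings:
  assumes "finite D" "finite V"
  shows "finite (increasing_fillings D V R)"
proof (rule finite_subset)
  show "increasing_fillings D V R \<subseteq> {G. \<forall>c. (c \<in> D \<longrightarrow> G c \<in> V) \<and> (c \<notin> D \<longrightarrow> G c = 0)}"
    by (auto simp: increasing_fillings_def bij_betw_def)
qed (use assms in \<open>rule finite_set_of_finite_funs\<close>)

lemma image_increasing_fillings:
  "G \<in> increasing_fillings D V R \<Longrightarrow> G ` D = V"
  by (simp add: increasing_fillings_def bij_betw_def)

lemma strict_mono_on_inv_into:
  fixes f :: "'a::linorder \<Rightarrow> 'b::preorder"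
  assumes "bij_betw f V W" "strict_mono_on V f"
  shows "strict_mono_on W (inv_into V f)"
proof (rule strict_mono_onI)
  fix x y assume "x \<in> W" "y \<in> W" "x < y"
  with assms show "inv_into V f x < inv_into V f y"
    by (metis bij_betw_def f_inv_into_f inv_into_into strict_mono_on_less)
qed

lemma relabel_values_in_increasing_fillings:
  assumes f: "bij_betw f V W" "strict_mono_on V f" and R: "R \<subseteq> D \<times> D"
    and G: "G \<in> increasing_fillings D V R"
  shows "(\<lambda>c. if c \<in> D then f (G c) else 0) \<in> increasing_fillings D W R"
proof -
  have "bij_betw (f \<circ> G) D W"
    using G f(1) by (auto simp: increasing_fillings_def intro: bij_betw_trans)
  moreover have "f (G a) < f (G b)" if "(a, b) \<in> R" for a b
    using that G R f(1)
    by (auto simp: increasing_fillings_def bij_betw_def intro!: strict_mono_onD[OF f(2)])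
  ultimately show ?thesis
    using R by (auto simp: increasing_fillings_def cong: bij_betw_cong)
qed

lemma card_increasing_fillings_relabel_values:
  fixes f :: "'b::{zero,linorder} \<Rightarrow> 'c::{zero,linorder}"
  assumes f: "bij_betw f V W" "strict_mono_on V f" and R: "R \<subseteq> D \<times> D"
  shows "card (increasing_fillings D V R) = card (increasing_fillings D W R)"
proof (rule bij_betw_same_card)
  let ?g = "inv_into V f"
  have g: "bij_betw ?g W V" "strict_mono_on W ?g"
    using f by (auto intro: bij_betw_inv_into strict_mono_on_inv_into)
  let ?to = "\<lambda>G c. if c \<in> D then f (G c) else 0"
  let ?from = "\<lambda>G c. if c \<in> D then ?g (G c) else 0"
  show "bij_betw ?to (increasing_fillings D V R) (increasing_fillings D W R)"
  proof (rule bij_betw_byWitness[where f' = ?from])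
    show "\<forall>G\<in>increasing_fillings D V R. ?from (?to G) = G"
      using f(1) by (auto simp: fun_eq_iff increasing_fillings_def bij_betw_def)
    show "\<forall>G\<in>increasing_fillings D W R. ?to (?from G) = G"
      using f(1) by (auto simp: fun_eq_iff increasing_fillings_def bij_betw_def) (metis f_inv_into_f imageI)
  qed (use relabel_values_in_increasing_fillings f g R in blast)+
qed

lemma relabel_cells_in_increasing_fillings:
  assumes k: "bij_betw k D' D" and R: "R' \<subseteq> D' \<times> D'"
    and kR: "\<And>a b. a \<in> D' \<Longrightarrow> b \<in> D' \<Longrightarrow> (a, b) \<in> R' \<longleftrightarrow> (k a, k b) \<in> R"
    and G: "G \<in> increasing_fillings D V R"
  shows "(\<lambda>c. if c \<in> D' then G (k c) else 0) \<in> increasing_fillings D' V R'"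
proof -
  have "bij_betw (G \<circ> k) D' V"
    using G k by (auto simp: increasing_fillings_def intro: bij_betw_trans)
  then show ?thesis
    using G R kR by (fastforce simp: increasing_fillings_def cong: bij_betw_cong)
qed

lemma card_increasing_fillings_relabel_cells:
  assumes h: "bij_betw h D D'" and R: "R \<subseteq> D \<times> D" "R' \<subseteq> D' \<times> D'"
    and hR: "\<And>a b. a \<in> D \<Longrightarrow> b \<in> D \<Longrightarrow> (a, b) \<in> R \<longleftrightarrow> (h a, h b) \<in> R'"
  shows "card (increasing_fillings D V R) = card (increasing_fillings D' V R')"
proof (rule bij_betw_same_card)
  let ?k = "inv_into D h"
  have k: "bij_betw ?k D' D" "\<And>c. c \<in> D' \<Longrightarrow> h (?k c) = c" "\<And>c. c \<in> D \<Longrightarrow> ?k (h c) = c"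
    using h by (auto simp: bij_betw_inv_into bij_betw_inv_into_right bij_betw_inv_into_left)
  have kR: "(a, b) \<in> R' \<longleftrightarrow> (?k a, ?k b) \<in> R" if "a \<in> D'" "b \<in> D'" for a b
    using that hR[of "?k a" "?k b"] k by (auto simp: bij_betwE)
  let ?to = "\<lambda>G c. if c \<in> D' then G (?k c) else 0"
  let ?from = "\<lambda>G c. if c \<in> D then G (h c) else 0"
  show "bij_betw ?to (increasing_fillings D V R) (increasing_fillings D' V R')"
  proof (rule bij_betw_byWitness[where f' = ?from])
    show "\<forall>G\<in>increasing_fillings D V R. ?from (?to G) = G"
      using h k by (auto simp: fun_eq_iff increasing_fillings_def bij_betwE)
    show "\<forall>G\<in>increasing_fillings D' V R'. ?to (?from G) = G"
      using k by (auto simp: fun_eq_iff increasing_fillings_def bij_betwE)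
  qed (use relabel_cells_in_increasing_fillings h k kR hR R in blast)+
qed

lemma ex_bij_betw_strict_mono_card_linorder:
  fixes S :: "'a::linorder set"
  assumes "finite S"
  obtains e where "bij_betw e {..<card S} S" and "strict_mono_on {..<card S} e"
proof
  let ?xs = "sorted_list_of_set S"
  show "bij_betw ((!) ?xs) {..<card S} S"
    using assms by (intro bij_betw_nth) auto
  show "strict_mono_on {..<card S} ((!) ?xs)"
  proof (rule strict_mono_onI)
    fix r s assume "r \<in> {..<card S}" "s \<in> {..<card S}" "r < s"
    then show "?xs ! r < ?xs ! s"
      using assms sorted_wrt_nth_less[of "(<)" ?xs r s] by simp
  qed
qed

lemma card_increasing_fillings_values_eq:
  fixes V :: "'b::{zero,linorder} set" and W :: "'c::{zero,linorder} set"
  assumes "finite V" "finite W" "card V = card W" "R \<subseteq> D \<times> D"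
  shows "card (increasing_fillings D V R) = card (increasing_fillings D W R)"
proof -
  obtain e where "bij_betw e {..<card V} V" "strict_mono_on {..<card V} e"
    using assms(1) by (rule ex_bij_betw_strict_mono_card_linorder)
  moreover obtain e' where "bij_betw e' {..<card V} W" "strict_mono_on {..<card V} e'"
    using assms(2,3) ex_bij_betw_strict_mono_card_linorder by metis
  ultimately show ?thesis
    using card_increasing_fillings_relabel_values assms(4) by metis
qed

section \<open>Choosing one of k and -k for each k\<close>

abbreviation signed_range :: "nat \<Rightarrow> int set" where
  "signed_range n \<equiv> {- int n..-1} \<union> {1..int n}"

definition signed_choice :: "nat \<Rightarrow> nat set \<Rightarrow> int set" where
  "signed_choice n X = int ` X \<union> (\<lambda>k. - int k) ` ({1..n} - X)"

lemma signed_choice_subset: "X \<subseteq> {1..n} \<Longrightarrow> signed_choice n X \<subseteq> signed_range n"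
  by (auto simp: signed_choice_def)

lemma uminus_notin_signed_choice:
  "X \<subseteq> {1..n} \<Longrightarrow> v \<in> signed_choice n X \<Longrightarrow> - v \<notin> signed_choice n X"
  by (auto simp: signed_choice_def)

lemma card_signed_choice:
  assumes "X \<subseteq> {1..n}"
  shows "card (signed_choice n X) = n"
proof -
  have "finite X" using assms finite_subset by blast
  then have "card (signed_choice n X) = card (int ` X) + card ((\<lambda>k. - int k) ` ({1..n} - X))"
    unfolding signed_choice_def by (intro card_Un_disjoint) auto
  also have "\<dots> = card X + card ({1..n} - X)"
    by (simp add: card_image inj_on_def)
  also have "\<dots> = n"
    using assms \<open>finite X\<close> card_mono[OF _ assms] by (simp add: card_Diff_subset)
  finally show ?thesis .
qed

lemma eq_signed_choiceI:
  assumes "S \<subseteq> signed_range n" "\<And>v. v \<in> S \<Longrightarrow> - v \<notin> S"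
    and "\<And>v. v \<in> signed_range n \<Longrightarrow> v \<in> S \<or> - v \<in> S"
  shows "S = signed_choice n {k \<in> {1..n}. int k \<in> S}"
proof (intro equalityI subsetI)
  fix v assume v: "v \<in> S"
  define k where "k = nat \<bar>v\<bar>"
  have "v \<in> signed_range n" using assms(1) v by blast
  then have "k \<in> {1..n}" "v = int k \<or> v = - int k"
    unfolding k_def by auto
  then show "v \<in> signed_choice n {k \<in> {1..n}. int k \<in> S}"
    using v assms(2)[OF v] unfolding signed_choice_def by auto
next
  fix v assume "v \<in> signed_choice n {k \<in> {1..n}. int k \<in> S}"
  then show "v \<in> S"
    using assms(3)[of v] unfolding signed_choice_def by force
qed

lemma inj_on_signed_choice: "inj_on (signed_choice n) (Pow {1..n})"
proof (rule inj_onI)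
  fix X Y assume "X \<in> Pow {1..n}" "Y \<in> Pow {1..n}" "signed_choice n X = signed_choice n Y"
  moreover have "Z = {k. int k \<in> signed_choice n Z}" if "Z \<subseteq> {1..n}" for Z
    using that by (auto simp: signed_choice_def)
  ultimately show "X = Y" by (metis PowD)
qed

lemma signed_choice_Un_uminus:
  assumes "X \<subseteq> {1..n}"
  shows "signed_choice n X \<union> uminus ` signed_choice n X = signed_range n"
proof (intro equalityI subsetI)
  fix v assume "v \<in> signed_range n"
  define k where "k = nat \<bar>v\<bar>"
  have k: "k \<in> {1..n}" "v = int k \<or> v = - int k"
    using \<open>v \<in> signed_range n\<close> unfolding k_def by auto
  show "v \<in> signed_choice n X \<union> uminus ` signed_choice n X"
  proof (cases "k \<in> X")
    case True
    then have "int k \<in> signed_choice n X" by (simp add: signed_choice_def)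
    then show ?thesis using k(2) by force
  next
    case False
    then have "- int k \<in> signed_choice n X" using k(1) by (simp add: signed_choice_def)
    then show ?thesis using k(2) by force
  qed
qed (use signed_choice_subset[OF assms] in auto)

lemma card_UN_signed_choice_increasing_fillings:
  assumes "finite D" "card D = n" "R \<subseteq> D \<times> D"
  shows "card (\<Union>X\<in>Pow {1..n}. increasing_fillings D (signed_choice n X) R)
           = 2 ^ n * card (increasing_fillings D {1..n} R)"
proof -
  have fin: "finite (signed_choice n X)" if "X \<subseteq> {1..n}" for X
    using signed_choice_subset[OF that] by (rule finite_subset) simp
  have "card (\<Union>X\<in>Pow {1..n}. increasing_fillings D (signed_choice n X) R)
          = (\<Sum>X\<in>Pow {1..n}. card (increasing_fillings D (signed_choice n X) R))"
  proof (rule card_UN_disjoint)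
    show "\<forall>X\<in>Pow {1..n}. finite (increasing_fillings D (signed_choice n X) R)"
      using fin finite_increasing_fillings assms(1) by blast
    show "\<forall>X\<in>Pow {1..n}. \<forall>Y\<in>Pow {1..n}. X \<noteq> Y \<longrightarrow>
            increasing_fillings D (signed_choice n X) R \<inter> increasing_fillings D (signed_choice n Y) R = {}"
    proof (intro ballI impI)
      fix X Y assume "X \<in> Pow {1..n}" "Y \<in> Pow {1..n}" "X \<noteq> Y"
      then have "signed_choice n X \<noteq> signed_choice n Y"
        using inj_on_signed_choice by (metis inj_on_contraD)
      then show "increasing_fillings D (signed_choice n X) R \<inter> increasing_fillings D (signed_choice n Y) R = {}"
        using image_increasing_fillings by blast
    qed
  qed simp
  also have "\<dots> = (\<Sum>X\<in>Pow {1..n}. card (increasing_fillings D {1..n} R))"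
  proof (rule sum.cong)
    fix X assume "X \<in> Pow {1..n}"
    then show "card (increasing_fillings D (signed_choice n X) R) = card (increasing_fillings D {1..n} R)"
      using fin card_signed_choice assms(3) by (intro card_increasing_fillings_values_eq) auto
  qed simp
  also have "\<dots> = 2 ^ n * card (increasing_fillings D {1..n} R)"
    by (simp add: card_Pow)
  finally show ?thesis .
qed

section \<open>Adjacent boxes and the rotation\<close>

definition adjacent_pairs :: "('a::{plus,one} \<times> 'a) set \<Rightarrow> (('a \<times> 'a) \<times> ('a \<times> 'a)) set" where
  "adjacent_pairs D = {((i, j), (i, j + 1)) | i j. (i, j) \<in> D \<and> (i, j + 1) \<in> D}
     \<union> {((i, j), (i + 1, j)) | i j. (i, j) \<in> D \<and> (i + 1, j) \<in> D}"

lemma adjacent_pairs_iff: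
  "(a, b) \<in> adjacent_pairs D \<longleftrightarrow>
     a \<in> D \<and> b \<in> D \<and> (b = (fst a, snd a + 1) \<or> b = (fst a + 1, snd a))"
  by (cases a) (auto simp: adjacent_pairs_def)

lemma adjacent_pairs_subset: "adjacent_pairs D \<subseteq> D \<times> D"
  by (auto simp: adjacent_pairs_def)

lemma adjacent_pairs_mono: "A \<subseteq> B \<Longrightarrow> adjacent_pairs A \<subseteq> adjacent_pairs B"
  by (auto simp: adjacent_pairs_def)

lemma ball_adjacent_pairs_iff:
  "(\<forall>(a, b)\<in>adjacent_pairs D. F a < F b) \<longleftrightarrow>
     (\<forall>i j. (i, j) \<in> D \<and> (i, j + 1) \<in> D \<longrightarrow> F (i, j) < F (i, j + 1)) \<and>
     (\<forall>i j. (i, j) \<in> D \<and> (i + 1, j) \<in> D \<longrightarrow> F (i, j) < F (i + 1, j))"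
  unfolding adjacent_pairs_def by blast

lemma SYT_eq_increasing_fillings: "SYT D = increasing_fillings D {1..card D} (adjacent_pairs D)"
  by (simp add: SYT_def increasing_fillings_def ball_adjacent_pairs_iff)

lemma B_standard_iff_adjacent_pairs: "B_standard D F \<longleftrightarrow> (\<forall>(a, b)\<in>adjacent_pairs D. F a < F b)"
  by (simp add: B_standard_def ball_adjacent_pairs_iff)

lemma icontent_adjacent_pair:
  "(a, b) \<in> adjacent_pairs D \<Longrightarrow> icontent b = icontent a + 1 \<or> icontent b = icontent a - 1"
  by (auto simp: adjacent_pairs_iff icontent_def)

lemma rot_rot [simp]: "rot (rot c) = c"
  by (simp add: rot_def)

lemma inj_rot: "inj rot"
  by (rule inj_on_inverseI[where g = rot]) simp

lemma rot_Pair: "rot (i, j) = (- i - 1, - j - 2)"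
  by (simp add: rot_def)

lemma icontent_rot [simp]: "icontent (rot c) = - icontent c - 1"
  by (simp add: rot_def icontent_def)

lemma rot_image_iff: "c \<in> rot ` D \<longleftrightarrow> rot c \<in> D"
  by (metis image_iff rot_rot)

lemma adjacent_pairs_rot_image_iff:
  "(a, b) \<in> adjacent_pairs (rot ` D) \<longleftrightarrow> (rot b, rot a) \<in> adjacent_pairs D"
  by (cases a; cases b) (auto simp: adjacent_pairs_iff rot_image_iff rot_Pair)

section \<open>Restriction to the positive part and symmetric extension\<close>

definition symmetric_extension :: "(int \<times> int) set \<Rightarrow> (int \<times> int \<Rightarrow> int) \<Rightarrow> int \<times> int \<Rightarrow> int" where
  "symmetric_extension P G c = (if c \<in> P then G c else if c \<in> rot ` P then - G (rot c) else 0)"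

context
  fixes P :: "(int \<times> int) set"
  assumes icontent_pos: "\<And>c. c \<in> P \<Longrightarrow> 0 < icontent c"
    \<comment> \<open>all contents of P are at least 3/2, which is where m \<ge> 1 enters\<close>
begin

lemma icontent_rot_image: "c \<in> rot ` P \<Longrightarrow> icontent c < - 1"
  using icontent_pos by auto

lemma rot_image_disjoint: "P \<inter> rot ` P = {}"
  using icontent_pos icontent_rot_image by fastforce

lemma adjacent_pairs_Un_rot:
  "adjacent_pairs (P \<union> rot ` P) = adjacent_pairs P \<union> adjacent_pairs (rot ` P)"
proof (intro equalityI subrelI)
  fix a b assume ab: "(a, b) \<in> adjacent_pairs (P \<union> rot ` P)"
  have "a \<in> P \<longleftrightarrow> b \<in> P"
    using icontent_adjacent_pair[OF ab] ab icontent_pos icontent_rot_image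
    unfolding adjacent_pairs_iff by fastforce
  then show "(a, b) \<in> adjacent_pairs P \<union> adjacent_pairs (rot ` P)"
    using ab unfolding Un_iff adjacent_pairs_iff by blast
qed (use adjacent_pairs_mono in blast)

lemma B_young_image_eq_signed_choice:
  assumes F: "B_young n (P \<union> rot ` P) F"
  shows "\<exists>X\<in>Pow {1..n}. F ` P = signed_choice n X"
proof -
  have img: "F ` (P \<union> rot ` P) = signed_range n"
    using F by (simp add: B_young_def bij_betw_def)
  have opp: "icontent c' = - icontent c - 1"
    if "c \<in> P \<union> rot ` P" "c' \<in> P \<union> rot ` P" "F c' = - F c" for c c'
    using F that unfolding B_young_def by blast
  have "F ` P = signed_choice n {k \<in> {1..n}. int k \<in> F ` P}"
  proof (rule eq_signed_choiceI)
    show "F ` P \<subseteq> signed_range n"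
      unfolding img[symmetric] by (rule image_mono) blast
    show "- v \<notin> F ` P" if "v \<in> F ` P" for v
    proof
      assume "- v \<in> F ` P"
      then obtain c c' where "c \<in> P" "c' \<in> P" "F c = v" "F c' = - v"
        using \<open>v \<in> F ` P\<close> by (metis imageE)
      then have "icontent c' = - icontent c - 1"
        using opp[of c c'] by simp
      then show False
        using icontent_pos[OF \<open>c \<in> P\<close>] icontent_pos[OF \<open>c' \<in> P\<close>] by linarith
    qed
    show "v \<in> F ` P \<or> - v \<in> F ` P" if v: "v \<in> signed_range n" for v
    proof (rule ccontr)
      assume none: "\<not> (v \<in> F ` P \<or> - v \<in> F ` P)"
      have "v \<in> F ` (P \<union> rot ` P)" "- v \<in> F ` (P \<union> rot ` P)"
        unfolding img using v by auto
      then obtain c c' where c: "c \<in> P \<union> rot ` P" "F c = v"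
        and c': "c' \<in> P \<union> rot ` P" "F c' = - v"
        by (metis imageE)
      have "c \<in> rot ` P" "c' \<in> rot ` P"
        using none c c' by (metis Un_iff image_eqI)+
      then have "icontent c < - 1" "icontent c' < - 1"
        by (simp_all add: icontent_rot_image)
      moreover have "icontent c' = - icontent c - 1"
        using opp[OF c(1) c'(1)] c(2) c'(2) by simp
      ultimately show False
        by linarith
    qed
  qed
  then show ?thesis by blast
qed

lemma symmetric_extension_in [simp]: "c \<in> P \<Longrightarrow> symmetric_extension P G c = G c"
  by (simp add: symmetric_extension_def)

lemma symmetric_extension_rot_in [simp]: "c \<in> P \<Longrightarrow> symmetric_extension P G (rot c) = - G c"
  using rot_image_disjoint by (auto simp: symmetric_extension_def)

lemma symmetric_extension_rot:
  assumes "c \<in> P \<union> rot ` P"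
  shows "symmetric_extension P G (rot c) = - symmetric_extension P G c"
  using assms by auto

lemma B_young_symmetric_extension:
  assumes "finite P" "X \<subseteq> {1..n}" and G: "bij_betw G P (signed_choice n X)"
  shows "B_young n (P \<union> rot ` P) (symmetric_extension P G)"
proof -
  let ?F = "symmetric_extension P G" and ?S = "signed_choice n X"
  have "bij_betw ?F P ?S"
    using G by (simp cong: bij_betw_cong)
  moreover have "bij_betw ?F (rot ` P) (uminus ` ?S)"
  proof -
    have "bij_betw rot (rot ` P) P"
      using inj_on_subset[OF inj_rot subset_UNIV] by (rule bij_betw_imageI) (simp add: image_image)
    moreover have "bij_betw uminus ?S (uminus ` ?S)"
      by (simp add: bij_betw_imageI)
    ultimately have "bij_betw (uminus \<circ> (G \<circ> rot)) (rot ` P) (uminus ` ?S)"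
      using G by (blast intro: bij_betw_trans)
    then show ?thesis
      by (rule bij_betw_cong[THEN iffD1, rotated]) auto
  qed
  moreover have "?S \<inter> uminus ` ?S = {}"
    using uminus_notin_signed_choice[OF assms(2)] by fastforce
  ultimately have "bij_betw ?F (P \<union> rot ` P) (?S \<union> uminus ` ?S)"
    by (rule bij_betw_combine)
  then have bij: "bij_betw ?F (P \<union> rot ` P) (signed_range n)"
    by (simp only: signed_choice_Un_uminus[OF assms(2)])
  have opp: "c' = rot c" if "c \<in> P \<union> rot ` P" "c' \<in> P \<union> rot ` P" "?F c' = - ?F c" for c c'
  proof (rule inj_onD)
    show "inj_on ?F (P \<union> rot ` P)" using bij by (rule bij_betw_imp_inj_on)
    show "?F c' = ?F (rot c)" using that(3) symmetric_extension_rot[OF that(1)] by simp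
    show "rot c \<in> P \<union> rot ` P" using that(1) by (auto simp: rot_image_iff)
  qed (rule that(2))
  show ?thesis
    unfolding B_young_def
  proof (intro conjI ballI impI)
    fix c c' assume "c \<in> P \<union> rot ` P" "c' \<in> P \<union> rot ` P" "?F c' = - ?F c"
    then have "c' = rot c" by (rule opp)
    then show "icontent c' = - icontent c - 1" by simp
  qed (use assms(1) bij in simp_all)
qed

lemma B_standard_symmetric_extension:
  assumes G: "\<forall>(a, b)\<in>adjacent_pairs P. G a < G b"
  shows "B_standard (P \<union> rot ` P) (symmetric_extension P G)"
  unfolding B_standard_iff_adjacent_pairs adjacent_pairs_Un_rot
proof (intro ballI, clarify)
  fix a b assume "(a, b) \<in> adjacent_pairs P \<union> adjacent_pairs (rot ` P)"
  then show "symmetric_extension P G a < symmetric_extension P G b"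
  proof
    assume ab: "(a, b) \<in> adjacent_pairs P"
    then have "a \<in> P" "b \<in> P"
      using adjacent_pairs_subset by blast+
    then show ?thesis
      using G ab by auto
  next
    assume "(a, b) \<in> adjacent_pairs (rot ` P)"
    then have ab: "(rot b, rot a) \<in> adjacent_pairs P"
      by (simp add: adjacent_pairs_rot_image_iff)
    then have "rot a \<in> P" "rot b \<in> P"
      using adjacent_pairs_subset by blast+
    moreover have "G (rot b) < G (rot a)"
      using G ab by auto
    ultimately show ?thesis
      using symmetric_extension_rot_in[of "rot a" G] symmetric_extension_rot_in[of "rot b" G] by simp
  qed
qed

lemma restrictions_B_standard_eq_UN_increasing_fillings:
  assumes "finite P"
  shows "(\<lambda>F c. if c \<in> P then F c else 0) `
           {F. B_young n (P \<union> rot ` P) F \<and> B_standard (P \<union> rot ` P) F}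
         = (\<Union>X\<in>Pow {1..n}. increasing_fillings P (signed_choice n X) (adjacent_pairs P))"
    (is "?restrict ` ?T = ?U")
proof (intro equalityI subsetI)
  fix G assume "G \<in> ?restrict ` ?T"
  then obtain F where F: "B_young n (P \<union> rot ` P) F" "B_standard (P \<union> rot ` P) F"
    and G: "G = ?restrict F"
    by blast
  obtain X where X: "X \<in> Pow {1..n}" "F ` P = signed_choice n X"
    using B_young_image_eq_signed_choice[OF F(1)] by blast
  have "inj_on F P"
    using F(1) inj_on_subset[of F "P \<union> rot ` P" P] by (simp add: B_young_def bij_betw_def)
  then have "bij_betw G P (signed_choice n X)"
    using X(2) by (simp add: G bij_betw_def inj_on_def)
  moreover have "G a < G b" if ab: "(a, b) \<in> adjacent_pairs P" for a b
  proof -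
    have "a \<in> P" "b \<in> P"
      using ab adjacent_pairs_subset by blast+
    moreover have "F a < F b"
      using F(2) ab unfolding B_standard_iff_adjacent_pairs adjacent_pairs_Un_rot by blast
    ultimately show ?thesis
      by (simp add: G)
  qed
  moreover have "\<forall>c. c \<notin> P \<longrightarrow> G c = 0"
    by (simp add: G)
  ultimately have "G \<in> increasing_fillings P (signed_choice n X) (adjacent_pairs P)"
    unfolding increasing_fillings_def by blast
  then show "G \<in> ?U"
    using X(1) by blast
next
  fix G assume "G \<in> ?U"
  then obtain X where X: "X \<subseteq> {1..n}"
    and G: "G \<in> increasing_fillings P (signed_choice n X) (adjacent_pairs P)"
    by blast
  have "symmetric_extension P G \<in> ?T"
    using G B_young_symmetric_extension[OF assms X] B_standard_symmetric_extension
    by (simp add: increasing_fillings_def)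
  moreover have "G = ?restrict (symmetric_extension P G)"
    using G by (auto simp: increasing_fillings_def)
  ultimately show "G \<in> ?restrict ` ?T"
    by blast
qed

end

definition shift_cell :: "int \<Rightarrow> nat \<times> nat \<Rightarrow> int \<times> int" where
  "shift_cell s = (\<lambda>(i, j). (int i, int j + s))"

lemma inj_shift_cell: "inj (shift_cell s)"
  by (auto simp: inj_def shift_cell_def)

lemma icontent_shift_cell: "icontent (shift_cell s (i, j)) = int j - int i + s"
  by (simp add: shift_cell_def icontent_def)

lemma adjacent_pairs_shift_cell_iff:
  "(shift_cell s a, shift_cell s b) \<in> adjacent_pairs (shift_cell s ` L) \<longleftrightarrow> (a, b) \<in> adjacent_pairs L"
proof -
  have mem: "shift_cell s c \<in> shift_cell s ` L \<longleftrightarrow> c \<in> L" for c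
    using inj_shift_cell by (simp add: inj_image_mem_iff)
  show ?thesis
    by (cases a; cases b) (auto simp: adjacent_pairs_iff mem shift_cell_def)
qed

lemma place_eq_image:
  "place L m = shift_cell (int m - Min {int j - int i | i j. (i, j) \<in> L}) ` L"
  by (simp add: place_def shift_cell_def Let_def)

lemma icontent_place_ge:
  assumes "finite L" "c \<in> place L m"
  shows "int m \<le> icontent c"
proof -
  let ?C = "{int j - int i | i j. (i, j) \<in> L}"
  obtain i j where ij: "(i, j) \<in> L" "c = shift_cell (int m - Min ?C) (i, j)"
    using assms(2) by (auto simp: place_eq_image)
  have "?C = (\<lambda>(i, j). int j - int i) ` L"
    by force
  then have "Min ?C \<le> int j - int i"
    using assms(1) ij(1) by (auto intro!: Min_le)
  then show ?thesis
    using ij(2) by (simp add: icontent_shift_cell)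
qed

lemma card_T_B:
  assumes "finite L" "1 \<le> m"
  shows "card (T_B L m) = 2 ^ card L * num_SYT L"
proof -
  define s where "s = int m - Min {int j - int i | i j. (i, j) \<in> L}"
  let ?P = "place L m"
  have P: "?P = shift_cell s ` L"
    by (simp add: place_eq_image s_def)
  have bij: "bij_betw (shift_cell s) L ?P"
    unfolding P using inj_on_subset[OF inj_shift_cell subset_UNIV] by (rule inj_on_imp_bij_betw)
  then have "finite ?P" "card ?P = card L"
    using assms(1) by (simp_all add: bij_betw_finite bij_betw_same_card)
  have pos: "0 < icontent c" if "c \<in> ?P" for c
    using icontent_place_ge[OF assms(1) that] assms(2) by linarith
  have T: "T_B L m = (\<Union>X\<in>Pow {1..card L}.
             increasing_fillings ?P (signed_choice (card L) X) (adjacent_pairs ?P))"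
    unfolding T_B_def Let_def
    by (rule restrictions_B_standard_eq_UN_increasing_fillings[OF pos \<open>finite ?P\<close>])
  have "card (T_B L m) = 2 ^ card L * card (increasing_fillings ?P {1..card L} (adjacent_pairs ?P))"
    unfolding T using \<open>finite ?P\<close> \<open>card ?P = card L\<close> adjacent_pairs_subset
    by (rule card_UN_signed_choice_increasing_fillings)
  also have "card (increasing_fillings ?P {1..card L} (adjacent_pairs ?P))
      = card (increasing_fillings L {1..card L} (adjacent_pairs L))"
    using bij adjacent_pairs_subset adjacent_pairs_subset
    by (rule card_increasing_fillings_relabel_cells[symmetric]) (simp add: P adjacent_pairs_shift_cell_iff)
  finally show ?thesis
    by (simp add: num_SYT_def SYT_eq_increasing_fillings)
qed

lemma finite_young_diagram: "finite (young_diagram p)"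
proof -
  have "young_diagram p = (SIGMA i:{..<length p}. {..<p ! i})"
    by (auto simp: young_diagram_def)
  then show ?thesis
    by simp
qed

lemma finite_skew_diagram: "finite (skew_diagram mu nu)"
  by (simp add: skew_diagram_def finite_young_diagram)

theorem proposition6p5:
  fixes mu nu :: "nat list" and m :: nat
  assumes "is_partition mu" and "is_partition nu"
    and "young_diagram nu \<subseteq> young_diagram mu"
    and "m \<ge> 1"
  shows "card (T_B (skew_diagram mu nu) m)
           = 2 ^ card (skew_diagram mu nu) * num_SYT (skew_diagram mu nu)"
  \<comment> \<open>the count holds for any finite set of boxes\<close>
  using finite_skew_diagram assms(4) by (rule card_T_B)

end
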